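(* Let $l\ge1$ and consider a path graph with vertices $v_0,\dots,v_l$, where $v_i,v_j$ are adjacent iff $|i-j|=1$, whose vertices are each labeled with one of two colors $5$ and $6$. A move consists of choosing two adjacent vertices with the same color and changing the colors of both. If either $l$ is even and $v_0,v_l$ have different colors, or $l$ is odd and $v_0,v_l$ have the same color, then there is a finite sequence of moves after which $v_0$ and $v_l$ have both switched colors and every other vertex has its original color. *)

theory Defs
  imports Main
begin

(* Two colours 5 and 6, encoded as bool (True = colour 5, False = colour 6).
   A colouring of the path v_0..v_l is a function nat => bool; only the values
   at 0..l are relevant (moves never touch other indices). *)

definition path_move :: "nat \<Rightarrow> (nat \<Rightarrow> bool) \<Rightarrow> (nat \<Rightarrow> bool) \<Rightarrow> bool" where
  "path_move l c c' \<longleftrightarrow>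
     (\<exists>i. i < l \<and> c i = c (Suc i) \<and>
          c' = c(i := \<not> c i, Suc i := \<not> c (Suc i)))"

end

theory Submission
  imports Defs
begin

(* The endpoints a < b of a segment are flipped by induction on b: combine the flip of a and
   b - 1 with the move on the edge b - 1, b.  If b - 1 and b agree in colour the move is made
   first, otherwise after the inductive flip; either way b - 1 ends with its original colour.
   The condition "c a = c b iff b - a is odd" is exactly legality of the move for a single
   edge, and in either order it is inherited by the shorter segment. *)

lemma path_move_adjacent:
  assumes "i < l" and "c i = c (Suc i)"
  shows "path_move l c (c(i := \<not> c i, Suc i := \<not> c (Suc i)))"
  using assms unfolding path_move_def by blast

lemma path_move_rtranclp_flip_ends:
  assumes "a < b" and "b \<le> l" and "c a = c b \<longleftrightarrow> odd (b - a)"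
  shows "(path_move l)\<^sup>*\<^sup>* c (c(a := \<not> c a, b := \<not> c b))"
  using Suc_leI[OF assms(1)] assms(2,3)
proof (induction b arbitrary: c rule: dec_induct)
  case base
  then show ?case by (intro r_into_rtranclp path_move_adjacent) auto
next
  case (step n)
  have n: "a < n" "n < l" "a \<noteq> Suc n" using step.hyps step.prems by auto
  have parity: "odd (Suc n - a) \<longleftrightarrow> even (n - a)"
    using n(1) by (simp add: Suc_diff_le)
  show ?case
  proof (cases "c n = c (Suc n)")
    case True
    define c1 where "c1 = c(n := \<not> c n, Suc n := \<not> c (Suc n))"
    have "path_move l c c1"
      unfolding c1_def using n(2) True by (rule path_move_adjacent)
    moreover have "c1 a = c1 n \<longleftrightarrow> odd (n - a)"
      using step.prems(2) parity n True by (auto simp: c1_def)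
    then have "(path_move l)\<^sup>*\<^sup>* c1 (c1(a := \<not> c1 a, n := \<not> c1 n))"
      using n by (intro step.IH) auto
    moreover have "c1(a := \<not> c1 a, n := \<not> c1 n) = c(a := \<not> c a, Suc n := \<not> c (Suc n))"
      using n True by (auto simp: c1_def fun_eq_iff)
    ultimately show ?thesis by (metis converse_rtranclp_into_rtranclp)
  next
    case False
    define c2 where "c2 = c(a := \<not> c a, n := \<not> c n)"
    have "c a = c n \<longleftrightarrow> odd (n - a)"
      using step.prems(2) parity False by auto
    then have "(path_move l)\<^sup>*\<^sup>* c c2"
      unfolding c2_def using n by (intro step.IH) auto
    moreover have "path_move l c2 (c2(n := \<not> c2 n, Suc n := \<not> c2 (Suc n)))"
      using n False by (intro path_move_adjacent) (auto simp: c2_def)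
    moreover have "c2(n := \<not> c2 n, Suc n := \<not> c2 (Suc n)) = c(a := \<not> c a, Suc n := \<not> c (Suc n))"
      using n False by (auto simp: c2_def fun_eq_iff)
    ultimately show ?thesis by (metis rtranclp.rtrancl_into_rtrancl)
  qed
qed

theorem lemma13:
  fixes l :: nat and c :: "nat \<Rightarrow> bool"
  assumes "l \<ge> 1"
    and "(even l \<and> c 0 \<noteq> c l) \<or> (odd l \<and> c 0 = c l)"
  shows "\<exists>c'. (path_move l)\<^sup>*\<^sup>* c c' \<and>
              c' 0 = (\<not> c 0) \<and> c' l = (\<not> c l) \<and>
              (\<forall>i. 0 < i \<and> i < l \<longrightarrow> c' i = c i)"
proof (intro exI conjI)
  show "(path_move l)\<^sup>*\<^sup>* c (c(0 := \<not> c 0, l := \<not> c l))"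
    using assms by (intro path_move_rtranclp_flip_ends) auto
qed (use assms(1) in auto)

end
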